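(* Let $\mathcal{X}_1,\mathcal{X}_2$ be non-empty sets, $\mathcal{B}_i\subseteq\mathcal{P}(\mathcal{X}_i)\setminus\{\emptyset\}$ and $\mathcal{D}_i$ a coherent set of desirable gambles on $\mathcal{X}_i$ for $i\in\{1,2\}$. Then $\mathcal{D}_1\otimes\mathcal{D}_2$ is an independent product of $\mathcal{D}_1$ and $\mathcal{D}_2$.
   Context: Gambles on a non-empty set $\mathcal{X}$ are bounded real functions; $\mathcal{G}(\mathcal{X})$ is the set of gambles, $\mathcal{G}_{>0}(\mathcal{X})$ the non-negative non-zero gambles, $\mathbb{I}_A$ the indicator of $A$. For $\mathcal{A}\subseteq\mathcal{G}(\mathcal{X})$: $\mathrm{posi}(\mathcal{A}):=\{\sum_{i=1}^n\lambda_if_i\colon n\in\mathbb{N},\lambda_i>0,f_i\in\mathcal{A}\}$, $\mathcal{E}(\mathcal{A}):=\mathrm{posi}(\mathcal{A}\cup\mathcal{G}_{>0}(\mathcal{X}))$. A coherent set of desirable gambles $\mathcal{D}\subseteq\mathcal{G}(\mathcal{X})$ satisfies, for all $f,g\in\mathcal{G}(\mathcal{X})$ and $\lambda>0$: (D1) $f\geq0,f\neq0\Rightarrow f\in\mathcal{D}$; (D2) $f\in\mathcal{D}\Rightarrow\lambda f\in\mathcal{D}$; (D3) $f,g\in\mathcal{D}\Rightarrow f+g\in\mathcal{D}$; (D4) $f\leq0\Rightarrow f\notin\mathcal{D}$. Gambles on $\mathcal{X}_i$ are identified with their cylindrical extensions to $\mathcal{X}_1\times\mathcal{X}_2$, events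 $B\subseteq\mathcal{X}_1$ with $B\times\mathcal{X}_2$ (similarly for $\mathcal{X}_2$). $\mathcal{D}_1\otimes\mathcal{D}_2:=\mathcal{E}(\mathcal{A}_{1\to2}\cup\mathcal{A}_{2\to1})$, where $\mathcal{A}_{1\to2}:=\{f_2(X_2)\mathbb{I}_{B_1}(X_1)\colon f_2\in\mathcal{D}_2,B_1\in\mathcal{B}_1\cup\{\mathcal{X}_1\}\}$ and $\mathcal{A}_{2\to1}:=\{f_1(X_1)\mathbb{I}_{B_2}(X_2)\colon f_1\in\mathcal{D}_1,B_2\in\mathcal{B}_2\cup\{\mathcal{X}_2\}\}$. For $\mathcal{D}$ on $\mathcal{X}_1\times\mathcal{X}_2$ and $\{i,j\}=\{1,2\}$: $\mathrm{marg}_i(\mathcal{D}):=\{f\in\mathcal{G}(\mathcal{X}_i)\colon f(X_i)\in\mathcal{D}\}$, $\mathrm{marg}_i(\mathcal{D}\rfloor B_j):=\{f\in\mathcal{G}(\mathcal{X}_i)\colon f(X_i)\mathbb{I}_{B_j}(X_j)\in\mathcal{D}\}$. A coherent $\mathcal{D}$ on $\mathcal{X}_1\times\mathcal{X}_2$ is epistemically independent if $\mathrm{marg}_i(\mathcal{D}\rfloor B_j)=\mathrm{marg}_i(\mathcal{D})$ for all $\{i,j\}=\{1,2\}$ and $B_j\in\mathcal{B}_j$. An independent product of $\mathcal{D}_1,\mathcal{D}_2$ is an epistemically independent coherent set of desirable gambles $\mathcal{D}$ on $\mathcal{X}_1\times\mathcal{X}_2$ with $\mathrm{marg}_1(\mathcal{D})=\mathcal{D}_1$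 and $\mathrm{marg}_2(\mathcal{D})=\mathcal{D}_2$. *)

theory Defs
  imports "HOL-Library.Indicator_Function"
begin

text \<open>The possibility spaces X1, X2 are modelled as (nonempty) types 'a, 'b.
  Gambles are bounded real-valued functions.\<close>

definition gambles :: "('a \<Rightarrow> real) set" where
  "gambles = {f. \<exists>c. \<forall>x. \<bar>f x\<bar> \<le> c}"

definition pos_gambles :: "('a \<Rightarrow> real) set" where
  "pos_gambles = {f \<in> gambles. (\<forall>x. 0 \<le> f x) \<and> f \<noteq> (\<lambda>_. 0)}"

definition posi :: "('a \<Rightarrow> real) set \<Rightarrow> ('a \<Rightarrow> real) set" where
  "posi A = {g. \<exists>n::nat. n \<ge> 1 \<and> (\<exists>lam fs. (\<forall>i<n. lam i > (0::real) \<and> fs i \<in> A)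
                 \<and> g = (\<lambda>x. \<Sum>i<n. lam i * fs i x))}"

definition natext :: "('a \<Rightarrow> real) set \<Rightarrow> ('a \<Rightarrow> real) set" where
  "natext A = posi (A \<union> pos_gambles)"

definition coherent :: "('a \<Rightarrow> real) set \<Rightarrow> bool" where
  "coherent D \<longleftrightarrow> D \<subseteq> gambles \<and>
     (\<forall>f\<in>gambles. (\<forall>x. 0 \<le> f x) \<and> f \<noteq> (\<lambda>_. 0) \<longrightarrow> f \<in> D) \<and>
     (\<forall>f\<in>gambles. \<forall>lam::real. f \<in> D \<and> lam > 0 \<longrightarrow> (\<lambda>x. lam * f x) \<in> D) \<and>
     (\<forall>f\<in>gambles. \<forall>g\<in>gambles. f \<in> D \<and> g \<in> D \<longrightarrow> (\<lambda>x. f x + g x) \<in> D) \<and>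
     (\<forall>f\<in>gambles. (\<forall>x. f x \<le> 0) \<longrightarrow> f \<notin> D)"

definition A12 :: "'a set set \<Rightarrow> ('b \<Rightarrow> real) set \<Rightarrow> ('a \<times> 'b \<Rightarrow> real) set" where
  "A12 \<B>1 D2 = {(\<lambda>(x, y). f2 y * indicator B1 x) | f2 B1. f2 \<in> D2 \<and> B1 \<in> \<B>1 \<union> {UNIV}}"

definition A21 :: "'b set set \<Rightarrow> ('a \<Rightarrow> real) set \<Rightarrow> ('a \<times> 'b \<Rightarrow> real) set" where
  "A21 \<B>2 D1 = {(\<lambda>(x, y). f1 x * indicator B2 y) | f1 B2. f1 \<in> D1 \<and> B2 \<in> \<B>2 \<union> {UNIV}}"

definition indep_natext ::
  "'a set set \<Rightarrow> 'b set set \<Rightarrow> ('a \<Rightarrow> real) set \<Rightarrow> ('b \<Rightarrow> real) set \<Rightarrow> ('a \<times> 'b \<Rightarrow> real) set" where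
  "indep_natext \<B>1 \<B>2 D1 D2 = natext (A12 \<B>1 D2 \<union> A21 \<B>2 D1)"

definition marg1 :: "('a \<times> 'b \<Rightarrow> real) set \<Rightarrow> ('a \<Rightarrow> real) set" where
  "marg1 D = {f \<in> gambles. (\<lambda>(x, y). f x) \<in> D}"

definition marg2 :: "('a \<times> 'b \<Rightarrow> real) set \<Rightarrow> ('b \<Rightarrow> real) set" where
  "marg2 D = {f \<in> gambles. (\<lambda>(x, y). f y) \<in> D}"

definition marg1_cond :: "('a \<times> 'b \<Rightarrow> real) set \<Rightarrow> 'b set \<Rightarrow> ('a \<Rightarrow> real) set" where
  "marg1_cond D B2 = {f \<in> gambles. (\<lambda>(x, y). f x * indicator B2 y) \<in> D}"

definition marg2_cond :: "('a \<times> 'b \<Rightarrow> real) set \<Rightarrow> 'a set \<Rightarrow> ('b \<Rightarrow> real) set" where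
  "marg2_cond D B1 = {f \<in> gambles. (\<lambda>(x, y). f y * indicator B1 x) \<in> D}"

definition epistemically_independent ::
  "'a set set \<Rightarrow> 'b set set \<Rightarrow> ('a \<times> 'b \<Rightarrow> real) set \<Rightarrow> bool" where
  "epistemically_independent \<B>1 \<B>2 D \<longleftrightarrow> coherent D \<and>
     (\<forall>B2\<in>\<B>2. marg1_cond D B2 = marg1 D) \<and>
     (\<forall>B1\<in>\<B>1. marg2_cond D B1 = marg2 D)"

definition independent_product ::
  "'a set set \<Rightarrow> 'b set set \<Rightarrow> ('a \<Rightarrow> real) set \<Rightarrow> ('b \<Rightarrow> real) set \<Rightarrow> ('a \<times> 'b \<Rightarrow> real) set \<Rightarrow> bool" where
  "independent_product \<B>1 \<B>2 D1 D2 D \<longleftrightarrow> epistemically_independent \<B>1 \<B>2 D \<and>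
     marg1 D = D1 \<and> marg2 D = D2"

end

theory Submission
  imports Defs
begin

(* If a gamble g of the independent natural extension were nonpositive, it could be written
   as g(x,y) = phi x y + psi y x + H(x,y) with sections phi x in D2 or zero, psi y in D1 or
   zero, each taking finitely many values, and H >= 0.  Let alpha f h be the supremum of the
   section f over the fibre of psi above h.  Coherence of D2 and of D1, through Ville's theorem
   of the alternative, gives strictly positive weights p and q such that every nonzero row of
   alpha has positive p-average and every nonzero column negative q-average; summing q f p h
   alpha f h in both orders shows that all sections vanish, so g = H, which is positive
   somewhere.  For the marginals: if f is not in D1,
   then D1 extends to a coherent set containing -f (unless f = 0), and f(x) I_B(y) in the
   extension would then cancel against -f(x) I_B(y). *)

section \<open>Theorems of the alternative\<close>

definition nonneg_independent :: "'i set \<Rightarrow> 'j set \<Rightarrow> ('i \<Rightarrow> 'j \<Rightarrow> real) \<Rightarrow> bool" where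
  "nonneg_independent I J v \<longleftrightarrow>
     (\<forall>\<mu>. (\<forall>i\<in>I. 0 \<le> \<mu> i) \<and> (\<forall>j\<in>J. (\<Sum>i\<in>I. \<mu> i * v i j) = 0) \<longrightarrow> (\<forall>i\<in>I. \<mu> i = 0))"

lemma nonneg_independentD:
  "nonneg_independent I J v \<Longrightarrow> \<forall>i\<in>I. 0 \<le> \<mu> i \<Longrightarrow> \<forall>j\<in>J. (\<Sum>i\<in>I. \<mu> i * v i j) = 0
    \<Longrightarrow> i \<in> I \<Longrightarrow> \<mu> i = 0"
  unfolding nonneg_independent_def by blast

lemma nonneg_independent_subset:
  assumes "nonneg_independent I J v" "F \<subseteq> I" "finite I"
  shows "nonneg_independent F J v"
  unfolding nonneg_independent_def
proof (intro allI impI ballI)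
  fix \<mu> i assume \<mu>: "(\<forall>i\<in>F. 0 \<le> \<mu> i) \<and> (\<forall>j\<in>J. (\<Sum>i\<in>F. \<mu> i * v i j) = 0)" and i: "i \<in> F"
  define \<mu>' where "\<mu>' i = (if i \<in> F then \<mu> i else 0)" for i
  have "(\<Sum>i\<in>I. \<mu>' i * v i j) = (\<Sum>i\<in>F. \<mu>' i * v i j)" for j
    using assms(2,3) by (intro sum.mono_neutral_right) (auto simp: \<mu>'_def)
  also have "(\<Sum>i\<in>F. \<mu>' i * v i j) = (\<Sum>i\<in>F. \<mu> i * v i j)" for j
    by (intro sum.cong) (auto simp: \<mu>'_def)
  finally have "\<mu>' i = 0"
    using \<mu> i assms by (intro nonneg_independentD[OF assms(1)]) (auto simp: \<mu>'_def)
  then show "\<mu> i = 0" using i by (simp add: \<mu>'_def)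
qed

lemma nonneg_independent_project:
  assumes indep: "nonneg_independent (insert w F) J v" and "w \<notin> F" "finite F"
    and a: "\<forall>i\<in>F. 0 < a i" and c: "c \<le> 0"
  shows "nonneg_independent F J (\<lambda>i j. a i * v w j - c * v i j)"
  unfolding nonneg_independent_def
proof (intro allI impI ballI)
  fix \<mu> i assume \<mu>: "(\<forall>i\<in>F. 0 \<le> \<mu> i) \<and> (\<forall>j\<in>J. (\<Sum>i\<in>F. \<mu> i * (a i * v w j - c * v i j)) = 0)"
    and i: "i \<in> F"
  define \<mu>' where "\<mu>' = (\<lambda>i. - c * \<mu> i)(w := (\<Sum>i\<in>F. \<mu> i * a i))"
  have "(\<Sum>i\<in>insert w F. \<mu>' i * v i j) = (\<Sum>i\<in>F. \<mu> i * (a i * v w j - c * v i j))" for j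
  proof -
    have "(\<Sum>i\<in>F. \<mu>' i * v i j) = (\<Sum>i\<in>F. - c * \<mu> i * v i j)"
      using \<open>w \<notin> F\<close> by (intro sum.cong) (auto simp: \<mu>'_def)
    moreover have "(\<Sum>i\<in>F. \<mu> i * (a i * v w j - c * v i j))
        = (\<Sum>i\<in>F. \<mu> i * a i) * v w j + (\<Sum>i\<in>F. - c * \<mu> i * v i j)"
      by (simp add: sum_distrib_right sum_negf sum_subtractf right_diff_distrib
          sum_distrib_left algebra_simps)
    ultimately show ?thesis
      using \<open>w \<notin> F\<close> \<open>finite F\<close> by (simp add: \<mu>'_def)
  qed
  moreover have "\<forall>i\<in>insert w F. 0 \<le> \<mu>' i"
    using \<mu> a c by (auto simp: \<mu>'_def mult_nonpos_nonneg intro!: sum_nonneg)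
  ultimately have "\<mu>' w = 0"
    using \<mu> by (intro nonneg_independentD[OF indep]) auto
  then have "(\<Sum>i\<in>F. \<mu> i * a i) = 0" by (simp add: \<mu>'_def)
  then have "\<mu> i * a i = 0"
    using \<mu> a i \<open>finite F\<close> by (subst (asm) sum_nonneg_eq_0_iff) auto
  then show "\<mu> i = 0" using a i by force
qed

lemma exists_common_shift:
  fixes a d :: "'i \<Rightarrow> real"
  assumes "finite F" "F \<noteq> {}" and a: "\<forall>i\<in>F. 0 < a i" and c: "c \<le> 0"
    and ineq: "\<forall>i\<in>F. 0 < a i * b - c * d i"
  shows "\<exists>t. 0 < b + t * c \<and> (\<forall>i\<in>F. 0 < d i + t * a i)"
proof -
  define M where "M = Max ((\<lambda>i. - d i / a i) ` F)"
  have M: "- d i / a i \<le> M" if "i \<in> F" for i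
    using assms that by (auto simp: M_def)
  have "M \<in> (\<lambda>i. - d i / a i) ` F"
    unfolding M_def using assms by (intro Max_in) auto
  then obtain i0 where i0: "i0 \<in> F" "M = - d i0 / a i0" by blast
  have "b + M * c = (a i0 * b - c * d i0) / a i0"
    using a i0 by (auto simp: field_simps)
  then have \<delta>: "0 < b + M * c"
    using ineq a i0 by simp
  have "\<exists>t. M < t \<and> 0 < b + t * c"
  proof (cases "c = 0")
    case True
    then show ?thesis using \<delta> by (intro exI[of _ "M + 1"]) auto
  next
    case False
    then have "c < 0" using c by simp
    define t where "t = M + (b + M * c) / (- 2 * c)"
    have "b + t * c = (b + M * c) / 2"
      using \<open>c < 0\<close> by (simp add: t_def field_simps)
    moreover have "M < t"
      using \<delta> \<open>c < 0\<close> by (simp add: t_def divide_pos_neg)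
    ultimately show ?thesis using \<delta> by (intro exI[of _ t]) auto
  qed
  then obtain t where "M < t" "0 < b + t * c" by blast
  moreover have "0 < d i + t * a i" if "i \<in> F" for i
  proof -
    have "0 < a i" using a that by blast
    then have "- d i \<le> M * a i" using M[OF that] by (simp add: field_simps)
    moreover have "M * a i < t * a i" using \<open>M < t\<close> a that by simp
    ultimately show ?thesis by linarith
  qed
  ultimately show ?thesis by blast
qed

lemma gordan_alternative:
  fixes v :: "'i \<Rightarrow> 'j \<Rightarrow> real"
  assumes "finite I" "finite J" "nonneg_independent I J v"
  shows "\<exists>p. \<forall>i\<in>I. 0 < (\<Sum>j\<in>J. p j * v i j)"
  using assms(1,3)
proof (induction I arbitrary: v rule: finite_induct)
  case empty
  then show ?case by simp
next
  case (insert w F)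
  obtain p where p: "\<forall>i\<in>F. 0 < (\<Sum>j\<in>J. p j * v i j)"
    using insert nonneg_independent_subset[OF insert.prems] by blast
  define c where "c = (\<Sum>j\<in>J. p j * v w j)"
  show ?case
  proof (cases "0 < c \<or> F = {}")
    case True
    moreover have "0 < (\<Sum>j\<in>J. v w j * v w j)" if "F = {}"
    proof -
      obtain j where "j \<in> J" "v w j \<noteq> 0"
        using nonneg_independentD[OF insert.prems, of "\<lambda>_. 1" w] \<open>F = {}\<close> by auto
      then show ?thesis
        using assms(2) by (intro sum_pos2[of J j]) (auto simp: zero_less_mult_iff)
    qed
    ultimately show ?thesis using p by (auto simp: c_def)
  next
    case False
    \<comment> \<open>Replace each \<open>v i\<close> by the combination \<open>a i * v w - c * v i\<close> of \<open>v i\<close> and \<open>v w\<close>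
      that is orthogonal to \<open>p\<close>, solve for these by induction, and shift the solution along \<open>p\<close>.\<close>
    define a where "a i = (\<Sum>j\<in>J. p j * v i j)" for i
    have a: "\<forall>i\<in>F. 0 < a i" and c: "c \<le> 0" using p False by (auto simp: a_def)
    obtain q where q: "\<forall>i\<in>F. 0 < (\<Sum>j\<in>J. q j * (a i * v w j - c * v i j))"
      using insert.IH nonneg_independent_project[OF insert.prems insert.hyps(2,1) a c] by blast
    have "\<forall>i\<in>F. 0 < a i * (\<Sum>j\<in>J. q j * v w j) - c * (\<Sum>j\<in>J. q j * v i j)"
      using q by (simp add: sum_distrib_left sum_subtractf right_diff_distrib algebra_simps)
    then obtain t where t: "0 < (\<Sum>j\<in>J. q j * v w j) + t * c"
      "\<forall>i\<in>F. 0 < (\<Sum>j\<in>J. q j * v i j) + t * a i"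
      using exists_common_shift[OF insert.hyps(1) _ a c,
          where b = "\<Sum>j\<in>J. q j * v w j" and d = "\<lambda>i. \<Sum>j\<in>J. q j * v i j"] False
      by blast
    have "(\<Sum>j\<in>J. (q j + t * p j) * v i j) = (\<Sum>j\<in>J. q j * v i j) + t * a i" for i
      by (simp add: a_def algebra_simps sum.distrib sum_distrib_left)
    then show ?thesis
      using t by (intro exI[of _ "\<lambda>j. q j + t * p j"]) (auto simp: c_def a_def)
  qed
qed

lemma ville_alternative:
  fixes v :: "'i \<Rightarrow> 'j \<Rightarrow> real"
  assumes "finite I" "finite J"
    and no_dependence: "\<And>\<mu>. \<forall>i\<in>I. 0 \<le> \<mu> i \<Longrightarrow> \<forall>j\<in>J. (\<Sum>i\<in>I. \<mu> i * v i j) \<le> 0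
      \<Longrightarrow> \<forall>i\<in>I. \<mu> i = 0"
  shows "\<exists>p. (\<forall>j\<in>J. 0 < p j) \<and> (\<forall>i\<in>I. 0 < (\<Sum>j\<in>J. p j * v i j))"
proof -
  define w where "w = case_sum v (\<lambda>j0 j. of_bool (j = j0))"
  have sum_w: "(\<Sum>k\<in>I <+> J. \<mu> k * w k j) = (\<Sum>i\<in>I. \<mu> (Inl i) * v i j) + \<mu> (Inr j)"
    if "j \<in> J" for \<mu> j
  proof -
    have "J \<inter> {j'. j' = j} = {j}" using that by auto
    then show ?thesis using assms(1,2) by (simp add: sum.Plus w_def)
  qed
  have "nonneg_independent (I <+> J) J w"
    unfolding nonneg_independent_def
  proof (intro allI impI)
    fix \<mu> :: "'i + 'j \<Rightarrow> real"
    assume \<mu>: "(\<forall>k\<in>I <+> J. 0 \<le> \<mu> k) \<and> (\<forall>j\<in>J. (\<Sum>k\<in>I <+> J. \<mu> k * w k j) = 0)"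
    have "\<forall>j\<in>J. (\<Sum>i\<in>I. \<mu> (Inl i) * v i j) \<le> 0"
    proof
      fix j assume "j \<in> J"
      then have "0 \<le> \<mu> (Inr j)" "(\<Sum>k\<in>I <+> J. \<mu> k * w k j) = 0" using \<mu> by auto
      then show "(\<Sum>i\<in>I. \<mu> (Inl i) * v i j) \<le> 0" using sum_w[OF \<open>j \<in> J\<close>, of \<mu>] by linarith
    qed
    then have "\<forall>i\<in>I. \<mu> (Inl i) = 0"
      using \<mu> by (intro no_dependence) auto
    moreover from this have "\<forall>j\<in>J. \<mu> (Inr j) = 0"
      using \<mu> sum_w by simp
    ultimately show "\<forall>k\<in>I <+> J. \<mu> k = 0" by auto
  qed
  then obtain p where p: "\<forall>k\<in>I <+> J. 0 < (\<Sum>j\<in>J. p j * w k j)"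
    using gordan_alternative assms(1,2) by (metis finite_Plus)
  have "\<forall>j\<in>J. 0 < p j"
  proof
    fix j0 assume "j0 \<in> J"
    then have "Inr j0 \<in> I <+> J" by (rule InrI)
    moreover have "(\<Sum>j\<in>J. p j * of_bool (j = j0)) = p j0"
    proof -
      have "J \<inter> {j. j = j0} = {j0}" using \<open>j0 \<in> J\<close> by auto
      then show ?thesis using assms(2) by simp
    qed
    ultimately show "0 < p j0"
      using p[rule_format, of "Inr j0"] by (simp add: w_def)
  qed
  moreover have "\<forall>i\<in>I. 0 < (\<Sum>j\<in>J. p j * v i j)"
    using p InlI by (fastforce simp: w_def)
  ultimately show ?thesis by blast
qed

section \<open>Coherent sets of desirable gambles and natural extension\<close>

lemma gambles_add: "f \<in> gambles \<Longrightarrow> g \<in> gambles \<Longrightarrow> (\<lambda>x. f x + g x) \<in> gambles"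
  unfolding gambles_def by (fastforce intro: abs_triangle_ineq[THEN order_trans] add_mono)

lemma gambles_scale: "f \<in> gambles \<Longrightarrow> (\<lambda>x. c * f x) \<in> gambles"
  unfolding gambles_def by (fastforce simp: abs_mult intro: mult_left_mono)

lemma gambles_zero: "(\<lambda>_. 0) \<in> gambles"
  by (auto simp: gambles_def)

lemma coherent_subset_gambles: "coherent D \<Longrightarrow> D \<subseteq> gambles"
  by (simp add: coherent_def)

lemma coherent_nonnegI:
  "coherent D \<Longrightarrow> f \<in> gambles \<Longrightarrow> \<forall>x. 0 \<le> f x \<Longrightarrow> f \<noteq> (\<lambda>_. 0) \<Longrightarrow> f \<in> D"
  by (simp add: coherent_def)

lemma coherent_scaleI: "coherent D \<Longrightarrow> f \<in> D \<Longrightarrow> 0 < c \<Longrightarrow> (\<lambda>x. c * f x) \<in> D"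
  unfolding coherent_def by (meson subsetD)

lemma coherent_addI: "coherent D \<Longrightarrow> f \<in> D \<Longrightarrow> g \<in> D \<Longrightarrow> (\<lambda>x. f x + g x) \<in> D"
  unfolding coherent_def by (meson subsetD)

lemma coherent_ex_pos: "coherent D \<Longrightarrow> f \<in> D \<Longrightarrow> \<exists>x. 0 < f x"
  unfolding coherent_def by (meson not_le subsetD)

lemma coherent_zero_notin: "coherent D \<Longrightarrow> (\<lambda>_. 0) \<notin> D"
  using coherent_ex_pos by fastforce

lemma coherent_add_insert_zeroI:
  "coherent D \<Longrightarrow> f \<in> D \<Longrightarrow> g \<in> insert (\<lambda>_. 0) D \<Longrightarrow> (\<lambda>x. f x + g x) \<in> D"
  using coherent_addI by auto

lemma coherent_upward_closed:
  assumes "coherent D" "f \<in> D" "h \<in> gambles" "\<forall>x. f x \<le> h x"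
  shows "h \<in> D"
proof (cases "h = f")
  case False
  have "f \<in> gambles" using assms coherent_subset_gambles by blast
  then have "(\<lambda>x. h x + -1 * f x) \<in> gambles"
    using assms(3) by (intro gambles_add gambles_scale)
  moreover have "\<forall>x. 0 \<le> h x + -1 * f x"
    using assms(4) by simp
  moreover have "(\<lambda>x. h x + -1 * f x) \<noteq> (\<lambda>_. 0)"
    using False by (auto simp: fun_eq_iff)
  ultimately have "(\<lambda>x. h x + -1 * f x) \<in> D"
    by (rule coherent_nonnegI[OF assms(1)])
  from coherent_addI[OF assms(1,2) this] show ?thesis by simp
qed (use assms(2) in simp)

lemma coherent_sum:
  assumes "coherent D" "finite S" "\<forall>s\<in>S. 0 \<le> c s \<and> h s \<in> D" "\<exists>s\<in>S. 0 < c s"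
  shows "(\<lambda>x. \<Sum>s\<in>S. c s * h s x) \<in> D"
  using assms(2-)
proof (induction S rule: finite_induct)
  case empty
  then show ?case by simp
next
  case (insert a F)
  have sum: "(\<lambda>x. \<Sum>s\<in>insert a F. c s * h s x) = (\<lambda>x. c a * h a x + (\<Sum>s\<in>F. c s * h s x))"
    using insert.hyps by simp
  consider "0 < c a" "\<exists>s\<in>F. 0 < c s" | "0 < c a" "\<forall>s\<in>F. c s = 0" | "c a = 0" "\<exists>s\<in>F. 0 < c s"
    using insert.prems by force
  then show ?case
  proof cases
    case 1
    then show ?thesis
      using insert coherent_scaleI[OF assms(1)] coherent_addI[OF assms(1)] by (simp add: sum)
  next
    case 2
    then show ?thesis
      using insert.prems coherent_scaleI[OF assms(1)] by (simp add: sum)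
  next
    case 3
    then show ?thesis using insert by (simp add: sum)
  qed
qed

lemma posi_base: "f \<in> A \<Longrightarrow> f \<in> posi A"
  unfolding posi_def by (auto intro!: exI[of _ 1] exI[of _ "\<lambda>_. 1"] exI[of _ "\<lambda>_. f"])

lemma posi_mono: "A \<subseteq> B \<Longrightarrow> posi A \<subseteq> posi B"
  unfolding posi_def by blast

lemma posi_scale: "g \<in> posi A \<Longrightarrow> 0 < c \<Longrightarrow> (\<lambda>x. c * g x) \<in> posi A"
  unfolding posi_def
proof (elim CollectE exE conjE, intro CollectI exI conjI)
  fix n :: nat and lam fs
  assume "1 \<le> n" "\<forall>i<n. 0 < lam i \<and> fs i \<in> A" "g = (\<lambda>x. \<Sum>i<n. lam i * fs i x)" "0 < c"
  then show "1 \<le> n" "\<forall>i<n. 0 < c * lam i \<and> fs i \<in> A"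
    "(\<lambda>x. c * g x) = (\<lambda>x. \<Sum>i<n. c * lam i * fs i x)"
    by (auto simp: sum_distrib_left mult.assoc)
qed

lemma posi_add: "g \<in> posi A \<Longrightarrow> h \<in> posi A \<Longrightarrow> (\<lambda>x. g x + h x) \<in> posi A"
  unfolding posi_def
proof (elim CollectE exE conjE, intro CollectI)
  fix n m :: nat and lam fs lam' fs'
  assume "1 \<le> n" and n: "\<forall>i<n. 0 < lam i \<and> fs i \<in> A" and g: "g = (\<lambda>x. \<Sum>i<n. lam i * fs i x)"
    and m: "\<forall>i<m. 0 < lam' i \<and> fs' i \<in> A" and h: "h = (\<lambda>x. \<Sum>i<m. lam' i * fs' i x)"
  define L where "L i = (if i < n then lam i else lam' (i - n))" for i
  define Fs where "Fs i = (if i < n then fs i else fs' (i - n))" for i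
  have split: "(\<Sum>i<n + k. u i) = (\<Sum>i<n. u i) + (\<Sum>i<k. u (n + i))" for u :: "nat \<Rightarrow> real" and k
    by (induction k) simp_all
  have "(\<Sum>i<n + m. L i * Fs i x) = g x + h x" for x
    unfolding split[of "\<lambda>i. L i * Fs i x"] by (simp add: g h L_def Fs_def)
  then have "(\<lambda>x. g x + h x) = (\<lambda>x. \<Sum>i<n + m. L i * Fs i x)"
    by simp
  moreover have "\<forall>i<n + m. 0 < L i \<and> Fs i \<in> A"
    using n m by (auto simp: L_def Fs_def)
  ultimately show "\<exists>k::nat\<ge>1. \<exists>lam fs. (\<forall>i<k. 0 < lam i \<and> fs i \<in> A)
      \<and> (\<lambda>x. g x + h x) = (\<lambda>x. \<Sum>i<k. lam i * fs i x)"
    using \<open>1 \<le> n\<close> by (intro exI[of _ "n + m"]) auto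
qed

lemma posi_induct [consumes 1, case_names base scale add]:
  assumes "g \<in> posi A"
    and base: "\<And>f. f \<in> A \<Longrightarrow> P f"
    and scale: "\<And>f c. P f \<Longrightarrow> 0 < c \<Longrightarrow> P (\<lambda>x. c * f x)"
    and add: "\<And>f h. P f \<Longrightarrow> P h \<Longrightarrow> P (\<lambda>x. f x + h x)"
  shows "P g"
proof -
  obtain n :: nat and lam fs where "1 \<le> n" and gen: "\<forall>i<n. 0 < lam i \<and> fs i \<in> A"
    and g: "g = (\<lambda>x. \<Sum>i<n. lam i * fs i x)"
    using assms(1) unfolding posi_def by blast
  have "P (\<lambda>x. \<Sum>i<Suc k. lam i * fs i x)" if "Suc k \<le> n" for k
    using that
  proof (induction k)
    case 0
    then show ?case using gen by (simp add: base scale)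
  next
    case (Suc k)
    then show ?case using gen by (simp add: add base scale)
  qed
  from this[of "n - 1"] show ?thesis using \<open>1 \<le> n\<close> g by simp
qed

lemma natext_subset_gambles: "A \<subseteq> gambles \<Longrightarrow> natext A \<subseteq> gambles"
  unfolding natext_def
proof
  fix g assume A: "A \<subseteq> gambles" and "g \<in> posi (A \<union> pos_gambles)"
  from this(2) show "g \<in> gambles" using A
    by (induction rule: posi_induct) (auto simp: pos_gambles_def intro: gambles_add gambles_scale)
qed

lemma coherent_natext:
  assumes "A \<subseteq> gambles" and avoids_loss: "\<And>g. g \<in> natext A \<Longrightarrow> \<exists>x. 0 < g x"
  shows "coherent (natext A)"
  unfolding coherent_def
proof (intro conjI ballI allI impI)
  show "natext A \<subseteq> gambles" using natext_subset_gambles[OF assms(1)] .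
  fix f :: "'a \<Rightarrow> real" assume "f \<in> gambles"
  show "f \<in> natext A" if "(\<forall>x. 0 \<le> f x) \<and> f \<noteq> (\<lambda>_. 0)"
    using that \<open>f \<in> gambles\<close> unfolding natext_def by (intro posi_base) (simp add: pos_gambles_def)
  show "(\<lambda>x. c * f x) \<in> natext A" if "f \<in> natext A \<and> 0 < c" for c
    using that unfolding natext_def by (simp add: posi_scale)
  show "(\<lambda>x. f x + g x) \<in> natext A" if "f \<in> natext A \<and> g \<in> natext A" for g
    using that unfolding natext_def by (simp add: posi_add)
  show "f \<notin> natext A" if "\<forall>x. f x \<le> 0"
    using that avoids_loss by (meson not_le)
qed

section \<open>Nonpositive sums of desirable sections\<close>

lemma gambles_bdd_above: "f \<in> gambles \<Longrightarrow> bdd_above (f ` S)"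
  unfolding gambles_def by (auto intro: bdd_aboveI2 simp: abs_le_iff)

lemma coherent_positive_weights:
  fixes M :: "('b \<Rightarrow> real) \<Rightarrow> 'c \<Rightarrow> real"
  assumes D: "coherent D" and "finite R" "R \<subseteq> D" "finite C" and \<kappa>: "\<forall>y. \<kappa> y \<in> C"
    and dominated: "\<forall>f\<in>R. \<forall>y. f y \<le> M f (\<kappa> y)"
  shows "\<exists>p. (\<forall>c\<in>C. 0 < p c) \<and> (\<forall>f\<in>R. 0 < (\<Sum>c\<in>C. p c * M f c))"
proof (rule ville_alternative[OF \<open>finite R\<close> \<open>finite C\<close>])
  fix \<mu> assume \<mu>: "\<forall>f\<in>R. 0 \<le> \<mu> f" and le: "\<forall>c\<in>C. (\<Sum>f\<in>R. \<mu> f * M f c) \<le> 0"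
  show "\<forall>f\<in>R. \<mu> f = 0"
  proof (rule ccontr)
    assume "\<not> (\<forall>f\<in>R. \<mu> f = 0)"
    then have "\<exists>f\<in>R. 0 < \<mu> f" using \<mu> by force
    then have "(\<lambda>y. \<Sum>f\<in>R. \<mu> f * f y) \<in> D"
      using \<mu> \<open>R \<subseteq> D\<close> by (intro coherent_sum[OF D \<open>finite R\<close>]) auto
    then obtain y where "0 < (\<Sum>f\<in>R. \<mu> f * f y)"
      using coherent_ex_pos[OF D] by blast
    also have "\<dots> \<le> (\<Sum>f\<in>R. \<mu> f * M f (\<kappa> y))"
      using \<mu> dominated by (intro sum_mono mult_left_mono) auto
    also have "\<dots> \<le> 0" using le \<kappa> by blast
    finally show False by simp
  qed
qed

lemma weighted_row_col_sums_vanish: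
  fixes a :: "'r \<Rightarrow> 'c \<Rightarrow> real"
  assumes "finite R" "finite C" and q: "\<forall>r\<in>R. 0 < q r" and p: "\<forall>c\<in>C. 0 < p c"
    and rows: "\<forall>r\<in>R. 0 \<le> (\<Sum>c\<in>C. p c * a r c)"
    and cols: "\<forall>c\<in>C. (\<Sum>r\<in>R. q r * a r c) \<le> 0"
  shows "\<forall>r\<in>R. (\<Sum>c\<in>C. p c * a r c) = 0" and "\<forall>c\<in>C. (\<Sum>r\<in>R. q r * a r c) = 0"
proof -
  define S where "S = (\<Sum>r\<in>R. q r * (\<Sum>c\<in>C. p c * a r c))"
  have S_cols: "S = (\<Sum>c\<in>C. p c * (\<Sum>r\<in>R. q r * a r c))"
    unfolding S_def by (simp add: sum_distrib_left sum.swap[of _ R] algebra_simps)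
  have row_terms: "\<forall>r\<in>R. 0 \<le> q r * (\<Sum>c\<in>C. p c * a r c)"
    using q rows by (simp add: less_imp_le)
  have col_terms: "\<forall>c\<in>C. p c * (\<Sum>r\<in>R. q r * a r c) \<le> 0"
    using p cols by (simp add: less_imp_le mult_nonneg_nonpos)
  have "0 \<le> S" unfolding S_def using row_terms by (intro sum_nonneg) auto
  moreover have "S \<le> 0" unfolding S_cols using col_terms by (intro sum_nonpos) auto
  ultimately have "S = 0" by simp
  show "\<forall>r\<in>R. (\<Sum>c\<in>C. p c * a r c) = 0"
    using \<open>S = 0\<close> row_terms q \<open>finite R\<close> by (fastforce simp: S_def sum_nonneg_eq_0_iff)
  show "\<forall>c\<in>C. (\<Sum>r\<in>R. q r * a r c) = 0"
  proof -
    have "(\<Sum>c\<in>C. - (p c * (\<Sum>r\<in>R. q r * a r c))) = 0"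
      using \<open>S = 0\<close> by (simp add: S_cols sum_negf)
    then show ?thesis
      using col_terms p \<open>finite C\<close> by (fastforce simp: sum_nonneg_eq_0_iff)
  qed
qed

definition section_sup :: "('b \<Rightarrow> 'c) \<Rightarrow> ('b \<Rightarrow> real) \<Rightarrow> 'c \<Rightarrow> real" where
  "section_sup \<kappa> f c = Sup (f ` {y. \<kappa> y = c})"

lemma section_sup_upper: "f \<in> gambles \<Longrightarrow> f y \<le> section_sup \<kappa> f (\<kappa> y)"
  unfolding section_sup_def by (intro cSup_upper gambles_bdd_above) auto

lemma section_sup_least:
  "c \<in> range \<kappa> \<Longrightarrow> (\<And>y. \<kappa> y = c \<Longrightarrow> f y \<le> b) \<Longrightarrow> section_sup \<kappa> f c \<le> b"
  unfolding section_sup_def by (intro cSup_least) auto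

lemma section_sup_const:
  assumes "c \<in> range \<kappa>"
  shows "section_sup \<kappa> (\<lambda>_. b) c = b"
proof -
  have "(\<lambda>_. b) ` {y. \<kappa> y = c} = {b}" using assms by auto
  then show ?thesis by (simp add: section_sup_def)
qed

lemma coherent_insert_zero_subset_gambles:
  "coherent D \<Longrightarrow> insert (\<lambda>_. 0) D \<subseteq> gambles"
  using coherent_subset_gambles gambles_zero by blast

lemma coherent_section_row_weights:
  fixes \<phi> :: "'a \<Rightarrow> 'b \<Rightarrow> real" and \<psi> :: "'b \<Rightarrow> 'c"
  assumes D2: "coherent D2" and fin: "finite (range \<phi>)" "finite (range \<psi>)"
    and \<phi>: "range \<phi> \<subseteq> insert (\<lambda>_. 0) D2"
  obtains p where "\<forall>g\<in>range \<psi>. 0 < p g"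
    and "\<forall>f\<in>range \<phi> - {\<lambda>_. 0}. 0 < (\<Sum>g\<in>range \<psi>. p g * section_sup \<psi> f g)"
    and "\<forall>f\<in>range \<phi>. 0 \<le> (\<Sum>g\<in>range \<psi>. p g * section_sup \<psi> f g)"
proof -
  have "f y \<le> section_sup \<psi> f (\<psi> y)" if "f \<in> range \<phi>" for f y
    using that \<phi> coherent_insert_zero_subset_gambles[OF D2] by (intro section_sup_upper) auto
  then have "\<exists>p. (\<forall>g\<in>range \<psi>. 0 < p g)
      \<and> (\<forall>f\<in>range \<phi> - {\<lambda>_. 0}. 0 < (\<Sum>g\<in>range \<psi>. p g * section_sup \<psi> f g))"
    using fin \<phi> by (intro coherent_positive_weights[OF D2, where \<kappa> = \<psi>]) auto
  then obtain p where p: "\<forall>g\<in>range \<psi>. 0 < p g"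
    and p_rows: "\<forall>f\<in>range \<phi> - {\<lambda>_. 0}. 0 < (\<Sum>g\<in>range \<psi>. p g * section_sup \<psi> f g)"
    by blast
  moreover have "0 \<le> (\<Sum>g\<in>range \<psi>. p g * section_sup \<psi> f g)" if "f \<in> range \<phi>" for f
  proof (cases "f = (\<lambda>_. 0)")
    case True
    then show ?thesis by (simp add: section_sup_const)
  next
    case False
    then show ?thesis using p_rows that by (simp add: less_imp_le)
  qed
  ultimately show ?thesis using that by blast
qed

lemma coherent_section_col_weights:
  fixes \<phi> :: "'a \<Rightarrow> 'b \<Rightarrow> real" and \<psi> :: "'b \<Rightarrow> 'a \<Rightarrow> real"
  assumes D1: "coherent D1" and fin: "finite (range \<phi>)" "finite (range \<psi>)"
    and \<psi>: "range \<psi> \<subseteq> insert (\<lambda>_. 0) D1" and nonpos: "\<forall>x y. \<phi> x y + \<psi> y x \<le> 0"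
  obtains q where "\<forall>f\<in>range \<phi>. 0 < q f"
    and "\<forall>g\<in>range \<psi> - {\<lambda>_. 0}. (\<Sum>f\<in>range \<phi>. q f * section_sup \<psi> f g) < 0"
    and "\<forall>g\<in>range \<psi>. (\<Sum>f\<in>range \<phi>. q f * section_sup \<psi> f g) \<le> 0"
proof -
  have lower: "g x \<le> - section_sup \<psi> (\<phi> x) g" if "g \<in> range \<psi>" for x g
  proof -
    have "section_sup \<psi> (\<phi> x) g \<le> - g x"
      using that
    proof (rule section_sup_least)
      fix y assume "\<psi> y = g"
      then show "\<phi> x y \<le> - g x" using nonpos[rule_format, of x y] by simp
    qed
    then show ?thesis by linarith
  qed
  then have "\<exists>q. (\<forall>f\<in>range \<phi>. 0 < q f)
      \<and> (\<forall>g\<in>range \<psi> - {\<lambda>_. 0}. 0 < (\<Sum>f\<in>range \<phi>. q f * - section_sup \<psi> f g))"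
    using fin \<psi>
    by (intro coherent_positive_weights[OF D1, where \<kappa> = \<phi> and M = "\<lambda>g f. - section_sup \<psi> f g"]) auto
  then obtain q where q: "\<forall>f\<in>range \<phi>. 0 < q f"
    and q_cols: "\<forall>g\<in>range \<psi> - {\<lambda>_. 0}. (\<Sum>f\<in>range \<phi>. q f * section_sup \<psi> f g) < 0"
    by (auto simp: sum_negf)
  moreover have "(\<Sum>f\<in>range \<phi>. q f * section_sup \<psi> f g) \<le> 0" if g: "g \<in> range \<psi>" for g
  proof (cases "g = (\<lambda>_. 0)")
    case True
    then have "\<forall>f\<in>range \<phi>. q f * section_sup \<psi> f g \<le> 0"
      using q lower[OF g] by (auto intro!: mult_nonneg_nonpos simp: less_imp_le)
    then show ?thesis by (intro sum_nonpos) auto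
  next
    case False
    then show ?thesis using q_cols g by (simp add: less_imp_le)
  qed
  ultimately show ?thesis using that by blast
qed

lemma coherent_sections_nonpos_imp_zero:
  fixes \<phi> :: "'a \<Rightarrow> 'b \<Rightarrow> real" and \<psi> :: "'b \<Rightarrow> 'a \<Rightarrow> real"
  assumes D1: "coherent D1" and D2: "coherent D2"
    and fin: "finite (range \<phi>)" "finite (range \<psi>)"
    and \<phi>: "range \<phi> \<subseteq> insert (\<lambda>_. 0) D2" and \<psi>: "range \<psi> \<subseteq> insert (\<lambda>_. 0) D1"
    and nonpos: "\<forall>x y. \<phi> x y + \<psi> y x \<le> 0"
  shows "\<forall>x. \<phi> x = (\<lambda>_. 0)" and "\<forall>y. \<psi> y = (\<lambda>_. 0)"
proof -
  obtain p where p: "\<forall>g\<in>range \<psi>. 0 < p g"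
    and p_rows: "\<forall>f\<in>range \<phi> - {\<lambda>_. 0}. 0 < (\<Sum>g\<in>range \<psi>. p g * section_sup \<psi> f g)"
    and rows: "\<forall>f\<in>range \<phi>. 0 \<le> (\<Sum>g\<in>range \<psi>. p g * section_sup \<psi> f g)"
    by (rule coherent_section_row_weights[OF D2 fin \<phi>])
  obtain q where q: "\<forall>f\<in>range \<phi>. 0 < q f"
    and q_cols: "\<forall>g\<in>range \<psi> - {\<lambda>_. 0}. (\<Sum>f\<in>range \<phi>. q f * section_sup \<psi> f g) < 0"
    and cols: "\<forall>g\<in>range \<psi>. (\<Sum>f\<in>range \<phi>. q f * section_sup \<psi> f g) \<le> 0"
    by (rule coherent_section_col_weights[OF D1 fin \<psi> nonpos])
  note vanish = weighted_row_col_sums_vanish[OF fin q p rows cols]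
  show "\<forall>x. \<phi> x = (\<lambda>_. 0)"
  proof (rule ccontr)
    assume "\<not> (\<forall>x. \<phi> x = (\<lambda>_. 0))"
    then obtain x where "\<phi> x \<in> range \<phi> - {\<lambda>_. 0}" by auto
    then show False using vanish(1) p_rows[rule_format, of "\<phi> x"] by simp
  qed
  show "\<forall>y. \<psi> y = (\<lambda>_. 0)"
  proof (rule ccontr)
    assume "\<not> (\<forall>y. \<psi> y = (\<lambda>_. 0))"
    then obtain y where "\<psi> y \<in> range \<psi> - {\<lambda>_. 0}" by auto
    then show False using vanish(2) q_cols[rule_format, of "\<psi> y"] by simp
  qed
qed

section \<open>Section decompositions of the independent natural extension\<close>

lemma coherent_insert_zero_scaleI:
  "coherent D \<Longrightarrow> f \<in> insert (\<lambda>_. 0) D \<Longrightarrow> 0 < c \<Longrightarrow> (\<lambda>x. c * f x) \<in> insert (\<lambda>_. 0) D"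
  using coherent_scaleI by auto

lemma coherent_insert_zero_addI:
  "coherent D \<Longrightarrow> f \<in> insert (\<lambda>_. 0) D \<Longrightarrow> g \<in> insert (\<lambda>_. 0) D
    \<Longrightarrow> (\<lambda>x. f x + g x) \<in> insert (\<lambda>_. 0) D"
  using coherent_addI by auto

text \<open>\<open>g (x, y) = \<phi> x y + \<psi> y x + H (x, y)\<close>, where the sections \<open>\<phi> x\<close> and \<open>\<psi> y\<close> are
  desirable or zero and take finitely many values, and \<open>H \<ge> 0\<close>; the disjunction rules out the
  trivial decomposition of nonpositive gambles.\<close>

definition section_decomposable ::
  "('a \<Rightarrow> real) set \<Rightarrow> ('b \<Rightarrow> real) set \<Rightarrow> ('a \<times> 'b \<Rightarrow> real) \<Rightarrow> bool" where
  "section_decomposable D1 D2 g \<longleftrightarrow> (\<exists>\<phi> \<psi> H.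
     finite (range \<phi>) \<and> finite (range \<psi>) \<and>
     range \<phi> \<subseteq> insert (\<lambda>_. 0) D2 \<and> range \<psi> \<subseteq> insert (\<lambda>_. 0) D1 \<and> (\<forall>z. 0 \<le> H z) \<and>
     ((\<exists>z. 0 < H z) \<or> (\<exists>x. \<phi> x \<in> D2) \<or> (\<exists>y. \<psi> y \<in> D1)) \<and>
     (\<forall>x y. g (x, y) = \<phi> x y + \<psi> y x + H (x, y)))"

lemma section_decomposableE:
  assumes "section_decomposable D1 D2 g"
  obtains \<phi> \<psi> H where "finite (range \<phi>)" "finite (range \<psi>)"
    "range \<phi> \<subseteq> insert (\<lambda>_. 0) D2" "range \<psi> \<subseteq> insert (\<lambda>_. 0) D1"
    "\<forall>z. 0 \<le> H z" "(\<exists>z. 0 < H z) \<or> (\<exists>x. \<phi> x \<in> D2) \<or> (\<exists>y. \<psi> y \<in> D1)"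
    "\<forall>x y. g (x, y) = \<phi> x y + \<psi> y x + H (x, y)"
  using assms unfolding section_decomposable_def by (elim exE conjE) (rule that)

lemma section_decomposable_scale:
  assumes D1: "coherent D1" and D2: "coherent D2"
    and "section_decomposable D1 D2 g" and c: "0 < c"
  shows "section_decomposable D1 D2 (\<lambda>z. c * g z)"
proof -
  obtain \<phi> \<psi> H where fin: "finite (range \<phi>)" "finite (range \<psi>)"
    and \<phi>: "range \<phi> \<subseteq> insert (\<lambda>_. 0) D2" and \<psi>: "range \<psi> \<subseteq> insert (\<lambda>_. 0) D1"
    and H: "\<forall>z. 0 \<le> H z" and nontrivial: "(\<exists>z. 0 < H z) \<or> (\<exists>x. \<phi> x \<in> D2) \<or> (\<exists>y. \<psi> y \<in> D1)"
    and g: "\<forall>x y. g (x, y) = \<phi> x y + \<psi> y x + H (x, y)"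
    using assms(3) by (rule section_decomposableE)
  show ?thesis
    unfolding section_decomposable_def
  proof (intro exI[of _ "\<lambda>x y. c * \<phi> x y"] exI[of _ "\<lambda>y x. c * \<psi> y x"]
      exI[of _ "\<lambda>z. c * H z"] conjI)
    show "finite (range (\<lambda>x y. c * \<phi> x y))" "finite (range (\<lambda>y x. c * \<psi> y x))"
      using fin by (simp_all add: range_composition[of "\<lambda>f y. c * f y"]
          range_composition[of "\<lambda>f x. c * f x"])
    show "range (\<lambda>x y. c * \<phi> x y) \<subseteq> insert (\<lambda>_. 0) D2"
      using \<phi> c coherent_insert_zero_scaleI[OF D2] by blast
    show "range (\<lambda>y x. c * \<psi> y x) \<subseteq> insert (\<lambda>_. 0) D1"
      using \<psi> c coherent_insert_zero_scaleI[OF D1] by blast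
    show "\<forall>z. 0 \<le> c * H z" using H c by simp
    show "(\<exists>z. 0 < c * H z) \<or> (\<exists>x. (\<lambda>y. c * \<phi> x y) \<in> D2) \<or> (\<exists>y. (\<lambda>x. c * \<psi> y x) \<in> D1)"
      using nontrivial c coherent_scaleI[OF D1, of _ c] coherent_scaleI[OF D2, of _ c]
      by (metis mult_pos_pos)
    show "\<forall>x y. c * g (x, y) = c * \<phi> x y + c * \<psi> y x + c * H (x, y)"
      using g by (simp add: distrib_left)
  qed
qed

lemma section_decomposable_add:
  assumes D1: "coherent D1" and D2: "coherent D2"
    and "section_decomposable D1 D2 g" "section_decomposable D1 D2 g'"
  shows "section_decomposable D1 D2 (\<lambda>z. g z + g' z)"
proof -
  obtain \<phi> \<psi> H where fin: "finite (range \<phi>)" "finite (range \<psi>)"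
    and \<phi>: "range \<phi> \<subseteq> insert (\<lambda>_. 0) D2" and \<psi>: "range \<psi> \<subseteq> insert (\<lambda>_. 0) D1"
    and H: "\<forall>z. 0 \<le> H z" and nontrivial: "(\<exists>z. 0 < H z) \<or> (\<exists>x. \<phi> x \<in> D2) \<or> (\<exists>y. \<psi> y \<in> D1)"
    and g: "\<forall>x y. g (x, y) = \<phi> x y + \<psi> y x + H (x, y)"
    using assms(3) by (rule section_decomposableE)
  obtain \<phi>' \<psi>' H' where fin': "finite (range \<phi>')" "finite (range \<psi>')"
    and \<phi>': "range \<phi>' \<subseteq> insert (\<lambda>_. 0) D2" and \<psi>': "range \<psi>' \<subseteq> insert (\<lambda>_. 0) D1"
    and H': "\<forall>z. 0 \<le> H' z" and g': "\<forall>x y. g' (x, y) = \<phi>' x y + \<psi>' y x + H' (x, y)"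
    using assms(4) by (rule section_decomposableE)
  show ?thesis
    unfolding section_decomposable_def
  proof (intro exI[of _ "\<lambda>x y. \<phi> x y + \<phi>' x y"] exI[of _ "\<lambda>y x. \<psi> y x + \<psi>' y x"]
      exI[of _ "\<lambda>z. H z + H' z"] conjI)
    have "range (\<lambda>x y. \<phi> x y + \<phi>' x y) \<subseteq> (\<lambda>(f, f') y. f y + f' y) ` (range \<phi> \<times> range \<phi>')"
      by auto
    then show "finite (range (\<lambda>x y. \<phi> x y + \<phi>' x y))"
      by (rule finite_subset) (use fin fin' in simp)
    have "range (\<lambda>y x. \<psi> y x + \<psi>' y x) \<subseteq> (\<lambda>(f, f') x. f x + f' x) ` (range \<psi> \<times> range \<psi>')"
      by auto
    then show "finite (range (\<lambda>y x. \<psi> y x + \<psi>' y x))"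
      by (rule finite_subset) (use fin fin' in simp)
    show "range (\<lambda>x y. \<phi> x y + \<phi>' x y) \<subseteq> insert (\<lambda>_. 0) D2"
      using \<phi> \<phi>' coherent_insert_zero_addI[OF D2] by blast
    show "range (\<lambda>y x. \<psi> y x + \<psi>' y x) \<subseteq> insert (\<lambda>_. 0) D1"
      using \<psi> \<psi>' coherent_insert_zero_addI[OF D1] by blast
    show "\<forall>z. 0 \<le> H z + H' z" using H H' by (simp add: add_nonneg_nonneg)
    have "(\<lambda>y. \<phi> x y + \<phi>' x y) \<in> D2" if "\<phi> x \<in> D2" for x
      using coherent_add_insert_zeroI[OF D2 that, of "\<phi>' x"] \<phi>' by auto
    moreover have "(\<lambda>x. \<psi> y x + \<psi>' y x) \<in> D1" if "\<psi> y \<in> D1" for y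
      using coherent_add_insert_zeroI[OF D1 that, of "\<psi>' y"] \<psi>' by auto
    moreover have "0 < H z + H' z" if "0 < H z" for z
      using that H'[rule_format, of z] by linarith
    ultimately show "(\<exists>z. 0 < H z + H' z) \<or> (\<exists>x. (\<lambda>y. \<phi> x y + \<phi>' x y) \<in> D2)
        \<or> (\<exists>y. (\<lambda>x. \<psi> y x + \<psi>' y x) \<in> D1)"
      using nontrivial by blast
    show "\<forall>x y. g (x, y) + g' (x, y) = \<phi> x y + \<phi>' x y + (\<psi> y x + \<psi>' y x) + (H (x, y) + H' (x, y))"
      using g g' by simp
  qed
qed

lemma section_decomposable_A12:
  assumes "{} \<notin> \<B>1" "h \<in> A12 \<B>1 D2"
  shows "section_decomposable D1 D2 h"
proof -
  obtain f B where h: "h = (\<lambda>(x, y). f y * indicator B x)" and f: "f \<in> D2" and B: "B \<in> \<B>1 \<union> {UNIV}"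
    using assms(2) unfolding A12_def by blast
  have "B \<noteq> {}" using B assms(1) by auto
  then obtain x0 where "x0 \<in> B" by blast
  have "range (\<lambda>x. if x \<in> B then f else (\<lambda>_. 0)) \<subseteq> {f, \<lambda>_. 0}" by auto
  then show ?thesis
    unfolding section_decomposable_def
    using f \<open>x0 \<in> B\<close> finite_subset[of _ "{f, \<lambda>_. 0}"]
    by (intro exI[of _ "\<lambda>x. if x \<in> B then f else (\<lambda>_. 0)"] exI[of _ "\<lambda>_ _. 0"] exI[of _ "\<lambda>_. 0"])
      (auto simp: h indicator_def)
qed

lemma section_decomposable_A21:
  assumes "{} \<notin> \<B>2" "h \<in> A21 \<B>2 D1"
  shows "section_decomposable D1 D2 h"
proof -
  obtain f B where h: "h = (\<lambda>(x, y). f x * indicator B y)" and f: "f \<in> D1" and B: "B \<in> \<B>2 \<union> {UNIV}"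
    using assms(2) unfolding A21_def by blast
  have "B \<noteq> {}" using B assms(1) by auto
  then obtain y0 where "y0 \<in> B" by blast
  have "range (\<lambda>y. if y \<in> B then f else (\<lambda>_. 0)) \<subseteq> {f, \<lambda>_. 0}" by auto
  then show ?thesis
    unfolding section_decomposable_def
    using f \<open>y0 \<in> B\<close> finite_subset[of _ "{f, \<lambda>_. 0}"]
    by (intro exI[of _ "\<lambda>_ _. 0"] exI[of _ "\<lambda>y. if y \<in> B then f else (\<lambda>_. 0)"] exI[of _ "\<lambda>_. 0"])
      (auto simp: h indicator_def)
qed

lemma section_decomposable_pos_gamble:
  assumes "h \<in> pos_gambles"
  shows "section_decomposable D1 D2 h"
proof -
  have h: "\<forall>z. 0 \<le> h z" "h \<noteq> (\<lambda>_. 0)" using assms by (auto simp: pos_gambles_def)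
  then obtain z where "h z \<noteq> 0" by (auto simp: fun_eq_iff)
  moreover have "0 \<le> h z" using h(1) by blast
  ultimately have "\<exists>z. 0 < h z" by (intro exI[of _ z]) simp
  with h(1) show ?thesis
    unfolding section_decomposable_def
    by (intro exI[of _ "\<lambda>_ _. 0"] exI[of _ "\<lambda>_ _. 0"] exI[of _ h] conjI) simp_all
qed

lemma indep_natext_section_decomposable:
  assumes "coherent D1" "coherent D2" "{} \<notin> \<B>1" "{} \<notin> \<B>2"
    and "g \<in> indep_natext \<B>1 \<B>2 D1 D2"
  shows "section_decomposable D1 D2 g"
  using assms(5) unfolding indep_natext_def natext_def
proof (induction rule: posi_induct)
  case (base f)
  then show ?case
    by (auto intro: section_decomposable_A12[OF assms(3)] section_decomposable_A21[OF assms(4)]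
        section_decomposable_pos_gamble)
next
  case (scale f c)
  then show ?case by (rule section_decomposable_scale[OF assms(1,2)])
next
  case (add f h)
  then show ?case by (rule section_decomposable_add[OF assms(1,2)])
qed

lemma section_decomposable_ex_pos:
  assumes D1: "coherent D1" and D2: "coherent D2" and "section_decomposable D1 D2 g"
  shows "\<exists>z. 0 < g z"
proof (rule ccontr)
  assume "\<not> (\<exists>z. 0 < g z)"
  then have g_nonpos: "g (x, y) \<le> 0" for x y by (simp add: not_less)
  obtain \<phi> \<psi> H where fin: "finite (range \<phi>)" "finite (range \<psi>)"
    and \<phi>: "range \<phi> \<subseteq> insert (\<lambda>_. 0) D2" and \<psi>: "range \<psi> \<subseteq> insert (\<lambda>_. 0) D1"
    and H: "\<forall>z. 0 \<le> H z" and nontrivial: "(\<exists>z. 0 < H z) \<or> (\<exists>x. \<phi> x \<in> D2) \<or> (\<exists>y. \<psi> y \<in> D1)"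
    and g: "\<forall>x y. g (x, y) = \<phi> x y + \<psi> y x + H (x, y)"
    using assms(3) by (rule section_decomposableE)
  have "\<phi> x y + \<psi> y x \<le> 0" for x y
    using g[rule_format, of x y] g_nonpos[of x y] H[rule_format, of "(x, y)"] by linarith
  then have "\<forall>x y. \<phi> x y + \<psi> y x \<le> 0" by blast
  note vanish = coherent_sections_nonpos_imp_zero[OF D1 D2 fin \<phi> \<psi> this]
  then have "\<forall>x. \<phi> x \<notin> D2" "\<forall>y. \<psi> y \<notin> D1"
    using coherent_zero_notin[OF D1] coherent_zero_notin[OF D2] by auto
  then obtain x y where "0 < H (x, y)" using nontrivial by auto
  then show False using g g_nonpos[of x y] vanish by simp
qed

lemma indep_natext_ex_pos:
  assumes "coherent D1" "coherent D2" "{} \<notin> \<B>1" "{} \<notin> \<B>2"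
    and "g \<in> indep_natext \<B>1 \<B>2 D1 D2"
  shows "\<exists>z. 0 < g z"
  using assms by (intro section_decomposable_ex_pos indep_natext_section_decomposable)

lemma indep_natext_zero_notin:
  assumes "coherent D1" "coherent D2" "{} \<notin> \<B>1" "{} \<notin> \<B>2"
  shows "(\<lambda>_. 0) \<notin> indep_natext \<B>1 \<B>2 D1 D2"
  using indep_natext_ex_pos[OF assms] by fastforce

lemma indep_natext_mono:
  "D1 \<subseteq> D1' \<Longrightarrow> D2 \<subseteq> D2' \<Longrightarrow> indep_natext \<B>1 \<B>2 D1 D2 \<subseteq> indep_natext \<B>1 \<B>2 D1' D2'"
  unfolding indep_natext_def natext_def A12_def A21_def by (intro posi_mono) blast

lemma section_product_gamble:
  assumes "f \<in> gambles"
  shows "(\<lambda>(x, y). f y * indicator B x) \<in> gambles" "(\<lambda>(x, y). f x * indicator B y) \<in> gambles"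
proof -
  obtain c where c: "\<forall>x. \<bar>f x\<bar> \<le> c" using assms by (auto simp: gambles_def)
  then have "\<bar>f u * indicator B v\<bar> \<le> c" for u v
    by (auto simp: indicator_def intro: order_trans[OF abs_ge_zero])
  then show "(\<lambda>(x, y). f y * indicator B x) \<in> gambles" "(\<lambda>(x, y). f x * indicator B y) \<in> gambles"
    unfolding gambles_def by auto
qed

lemma coherent_indep_natext:
  assumes D1: "coherent D1" and D2: "coherent D2" and "{} \<notin> \<B>1" "{} \<notin> \<B>2"
  shows "coherent (indep_natext \<B>1 \<B>2 D1 D2)"
proof -
  have "A12 \<B>1 D2 \<union> A21 \<B>2 D1 \<subseteq> gambles"
    using coherent_subset_gambles[OF D1] coherent_subset_gambles[OF D2] section_product_gamble
    unfolding A12_def A21_def by blast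
  then show ?thesis
    using indep_natext_ex_pos[OF assms] unfolding indep_natext_def by (rule coherent_natext)
qed

section \<open>Marginals\<close>

lemma natext_insert_neg_representation:
  assumes D: "coherent D" and "g \<in> natext (insert (\<lambda>x. - f x) D)"
  shows "\<exists>d \<mu>. d \<in> insert (\<lambda>_. 0) D \<and> 0 \<le> \<mu> \<and> (d \<in> D \<or> 0 < \<mu>) \<and> (\<forall>x. g x = d x - \<mu> * f x)"
  using assms(2) unfolding natext_def
proof (induction rule: posi_induct)
  case (base h)
  then consider "h = (\<lambda>x. - f x)" | "h \<in> D" | "h \<in> pos_gambles" by blast
  then show ?case
  proof cases
    case 1
    then show ?thesis by (intro exI[of _ "\<lambda>_. 0"] exI[of _ 1]) simp
  next
    case 2
    then show ?thesis by (intro exI[of _ h] exI[of _ 0]) simp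
  next
    case 3
    then have "h \<in> D" by (auto simp: pos_gambles_def intro: coherent_nonnegI[OF D])
    then show ?thesis by (intro exI[of _ h] exI[of _ 0]) simp
  qed
next
  case (scale h c)
  then obtain d \<mu> where "d \<in> insert (\<lambda>_. 0) D" "0 \<le> \<mu>" "d \<in> D \<or> 0 < \<mu>" "\<forall>x. h x = d x - \<mu> * f x"
    by blast
  with \<open>0 < c\<close> show ?case
    using coherent_insert_zero_scaleI[OF D] coherent_scaleI[OF D]
    by (intro exI[of _ "\<lambda>x. c * d x"] exI[of _ "c * \<mu>"]) (auto simp: right_diff_distrib)
next
  case (add h h')
  obtain d \<mu> where d: "d \<in> insert (\<lambda>_. 0) D" "0 \<le> \<mu>" "d \<in> D \<or> 0 < \<mu>" "\<forall>x. h x = d x - \<mu> * f x"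
    using add.IH(1) by blast
  obtain d' \<mu>' where d': "d' \<in> insert (\<lambda>_. 0) D" "0 \<le> \<mu>'" "d' \<in> D \<or> 0 < \<mu>'"
    "\<forall>x. h' x = d' x - \<mu>' * f x"
    using add.IH(2) by blast
  have "(\<lambda>x. d x + d' x) \<in> D \<or> 0 < \<mu> + \<mu>'"
    using d d' coherent_add_insert_zeroI[OF D] by (auto simp: add.commute)
  with d d' show ?case
    using coherent_insert_zero_addI[OF D]
    by (intro exI[of _ "\<lambda>x. d x + d' x"] exI[of _ "\<mu> + \<mu>'"]) (auto simp: algebra_simps)
qed

lemma natext_insert_neg_ex_pos:
  assumes D: "coherent D" and f: "f \<in> gambles" "f \<notin> D" "f \<noteq> (\<lambda>_. 0)"
    and "g \<in> natext (insert (\<lambda>x. - f x) D)"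
  shows "\<exists>x. 0 < g x"
proof (rule ccontr)
  assume "\<not> (\<exists>x. 0 < g x)"
  obtain d \<mu> where d: "d \<in> insert (\<lambda>_. 0) D" "0 \<le> \<mu>" "d \<in> D \<or> 0 < \<mu>"
    and g: "\<forall>x. g x = d x - \<mu> * f x"
    using natext_insert_neg_representation[OF D assms(5)] by blast
  with \<open>\<not> (\<exists>x. 0 < g x)\<close> have d_le: "d x \<le> \<mu> * f x" for x
    by (metis diff_gt_0_iff_gt not_le)
  consider "\<mu> = 0" | "0 < \<mu>" "d \<in> D" | "0 < \<mu>" "d = (\<lambda>_. 0)"
    using d by force
  then show False
  proof cases
    case 1
    then show False using d d_le coherent_ex_pos[OF D] by (metis mult_zero_left not_le)
  next
    case 2
    then have "(\<lambda>x. inverse \<mu> * d x) \<in> D" by (intro coherent_scaleI[OF D]) auto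
    moreover have "inverse \<mu> * d x \<le> f x" for x
      using d_le[of x] \<open>0 < \<mu>\<close> by (simp add: field_simps)
    ultimately show False using coherent_upward_closed[OF D _ f(1)] f(2) by blast
  next
    case 3
    then have "\<forall>x. 0 \<le> f x" using d_le by (simp add: zero_le_mult_iff)
    then show False using coherent_nonnegI[OF D f(1)] f(2,3) by blast
  qed
qed

lemma coherent_natext_insert_neg:
  assumes "coherent D" "f \<in> gambles" "f \<notin> D" "f \<noteq> (\<lambda>_. 0)"
  shows "coherent (natext (insert (\<lambda>x. - f x) D))"
proof (rule coherent_natext)
  show "insert (\<lambda>x. - f x) D \<subseteq> gambles"
    using gambles_scale[OF assms(2), of "-1"] coherent_subset_gambles[OF assms(1)] by simp
qed (rule natext_insert_neg_ex_pos[OF assms])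

lemma coherent_rejecting_extension:
  assumes "coherent D" "f \<in> gambles" "f \<notin> D"
  obtains D' where "coherent D'" "D \<subseteq> D'" "(\<lambda>x. - f x) \<in> insert (\<lambda>_. 0) D'"
proof (cases "f = (\<lambda>_. 0)")
  case True
  then show ?thesis using assms(1) by (intro that[of D]) auto
next
  case False
  show ?thesis
  proof (rule that[OF coherent_natext_insert_neg[OF assms False]])
    show "D \<subseteq> natext (insert (\<lambda>x. - f x) D)"
      "(\<lambda>x. - f x) \<in> insert (\<lambda>_. 0) (natext (insert (\<lambda>x. - f x) D))"
      by (auto simp: natext_def intro: posi_base)
  qed
qed

lemma indep_natext_no_cancellation:
  assumes "coherent D1" "coherent D2" "{} \<notin> \<B>1" "{} \<notin> \<B>2"
    and "h \<in> indep_natext \<B>1 \<B>2 D1 D2" "(\<lambda>z. - h z) \<in> insert (\<lambda>_. 0) (indep_natext \<B>1 \<B>2 D1 D2)"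
  shows False
proof -
  have "(\<lambda>_. 0) \<in> indep_natext \<B>1 \<B>2 D1 D2"
  proof (cases "(\<lambda>z. - h z) = (\<lambda>_. 0)")
    case True
    then have "h = (\<lambda>_. 0)" by (metis add.inverse_neutral minus_minus)
    then show ?thesis using assms(5) by simp
  next
    case False
    then have "(\<lambda>z. h z + - h z) \<in> indep_natext \<B>1 \<B>2 D1 D2"
      using assms(5,6) unfolding indep_natext_def natext_def by (intro posi_add) auto
    then show ?thesis by simp
  qed
  then show False using indep_natext_zero_notin[OF assms(1-4)] by blast
qed

lemma marg1_cond_indep_natext:
  assumes D1: "coherent D1" and D2: "coherent D2" and \<B>: "{} \<notin> \<B>1" "{} \<notin> \<B>2"
    and B: "B \<in> \<B>2 \<union> {UNIV}"
  shows "marg1_cond (indep_natext \<B>1 \<B>2 D1 D2) B = D1"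
proof
  show "D1 \<subseteq> marg1_cond (indep_natext \<B>1 \<B>2 D1 D2) B"
    using B coherent_subset_gambles[OF D1]
    unfolding marg1_cond_def indep_natext_def natext_def A21_def by (auto intro: posi_base)
  show "marg1_cond (indep_natext \<B>1 \<B>2 D1 D2) B \<subseteq> D1"
  proof
    fix f assume "f \<in> marg1_cond (indep_natext \<B>1 \<B>2 D1 D2) B"
    then have f: "f \<in> gambles" and h: "(\<lambda>(x, y). f x * indicator B y) \<in> indep_natext \<B>1 \<B>2 D1 D2"
      by (simp_all add: marg1_cond_def)
    show "f \<in> D1"
    proof (rule ccontr)
      assume "f \<notin> D1"
      then obtain D1' where D1': "coherent D1'" "D1 \<subseteq> D1'" "(\<lambda>x. - f x) \<in> insert (\<lambda>_. 0) D1'"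
        using coherent_rejecting_extension[OF D1 f] by blast
      have "(\<lambda>(x, y). f x * indicator B y) \<in> indep_natext \<B>1 \<B>2 D1' D2"
        using h indep_natext_mono[OF D1'(2), of D2 D2] by blast
      moreover have "(\<lambda>z. - (case z of (x, y) \<Rightarrow> f x * indicator B y))
          \<in> insert (\<lambda>_. 0) (indep_natext \<B>1 \<B>2 D1' D2)"
      proof -
        have "(\<lambda>(x, y). g x * indicator B y) \<in> insert (\<lambda>_. 0) (indep_natext \<B>1 \<B>2 D1' D2)"
          if "g \<in> insert (\<lambda>_. 0) D1'" for g
          using that B unfolding indep_natext_def natext_def A21_def
          by (auto intro!: posi_base simp: fun_eq_iff)
        from this[OF D1'(3)] show ?thesis by (simp add: case_prod_beta')
      qed
      ultimately show False by (rule indep_natext_no_cancellation[OF D1'(1) D2 \<B>])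
    qed
  qed
qed

lemma marg2_cond_indep_natext:
  assumes D1: "coherent D1" and D2: "coherent D2" and \<B>: "{} \<notin> \<B>1" "{} \<notin> \<B>2"
    and B: "B \<in> \<B>1 \<union> {UNIV}"
  shows "marg2_cond (indep_natext \<B>1 \<B>2 D1 D2) B = D2"
proof
  show "D2 \<subseteq> marg2_cond (indep_natext \<B>1 \<B>2 D1 D2) B"
    using B coherent_subset_gambles[OF D2]
    unfolding marg2_cond_def indep_natext_def natext_def A12_def by (auto intro: posi_base)
  show "marg2_cond (indep_natext \<B>1 \<B>2 D1 D2) B \<subseteq> D2"
  proof
    fix f assume "f \<in> marg2_cond (indep_natext \<B>1 \<B>2 D1 D2) B"
    then have f: "f \<in> gambles" and h: "(\<lambda>(x, y). f y * indicator B x) \<in> indep_natext \<B>1 \<B>2 D1 D2"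
      by (simp_all add: marg2_cond_def)
    show "f \<in> D2"
    proof (rule ccontr)
      assume "f \<notin> D2"
      then obtain D2' where D2': "coherent D2'" "D2 \<subseteq> D2'" "(\<lambda>x. - f x) \<in> insert (\<lambda>_. 0) D2'"
        using coherent_rejecting_extension[OF D2 f] by blast
      have "(\<lambda>(x, y). f y * indicator B x) \<in> indep_natext \<B>1 \<B>2 D1 D2'"
        using h indep_natext_mono[OF order_refl D2'(2)] by blast
      moreover have "(\<lambda>z. - (case z of (x, y) \<Rightarrow> f y * indicator B x))
          \<in> insert (\<lambda>_. 0) (indep_natext \<B>1 \<B>2 D1 D2')"
      proof -
        have "(\<lambda>(x, y). g y * indicator B x) \<in> insert (\<lambda>_. 0) (indep_natext \<B>1 \<B>2 D1 D2')"
          if "g \<in> insert (\<lambda>_. 0) D2'" for g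
          using that B unfolding indep_natext_def natext_def A12_def
          by (auto intro!: posi_base simp: fun_eq_iff)
        from this[OF D2'(3)] show ?thesis by (simp add: case_prod_beta')
      qed
      ultimately show False by (rule indep_natext_no_cancellation[OF D1 D2'(1) \<B>])
    qed
  qed
qed

theorem proposition41:
  fixes \<B>1 :: "'a set set" and \<B>2 :: "'b set set"
    and D1 :: "('a \<Rightarrow> real) set" and D2 :: "('b \<Rightarrow> real) set"
  assumes "{} \<notin> \<B>1" and "{} \<notin> \<B>2"
    and "coherent D1" and "coherent D2"
  shows "independent_product \<B>1 \<B>2 D1 D2 (indep_natext \<B>1 \<B>2 D1 D2)"
proof -
  note marg1_cond = marg1_cond_indep_natext[OF assms(3,4,1,2)]
  note marg2_cond = marg2_cond_indep_natext[OF assms(3,4,1,2)]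
  have "marg1 D = marg1_cond D UNIV" "marg2 D = marg2_cond D UNIV" for D :: "('a \<times> 'b \<Rightarrow> real) set"
    by (simp_all add: marg1_def marg1_cond_def marg2_def marg2_cond_def)
  then show ?thesis
    unfolding independent_product_def epistemically_independent_def
    using coherent_indep_natext[OF assms(3,4,1,2)] marg1_cond marg2_cond by simp
qed

end
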